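(* Let $S$ be special with $D=\det S=\Omega^2\Delta$, and define $N_1,\dots,N_5$ as in the context. (i) For every $x\in\mathcal C(S)$ there exist $\ell\in\mathbb Z$ and $M\in\mathrm{SL}_3(\mathbb Z)$ whose first column is $x^t$ such that $M^tSM=S_3$, where \[ S_3=\begin{pmatrix} 0&0&N_3N_5N_4^2N_2\\ 0&-N_3N_5^3N_1&0\\ N_3N_5N_4^2N_2&0&N_4N_2\ell\end{pmatrix}. \] All entries of $S_3$ other than the $(3,3)$-entry are thus independent of $x$ and of the orbit; only $\ell$ depends on the orbit of $x$. (ii) If moreover $D$ is odd, then $\ell$ can be chosen with $0\le \ell<N$ and $\gcd(\ell,N)=1$, and with this normalization $\ell$ is uniquely determined by the $\mathbb Z$-orbit of $x$. (iii) The primitive adjugate of $S_3$ is \[ S_3^\dagger=\begin{pmatrix} -\ell N_5N_1&0&N_3N_5^2N_4N_1\\ 0&-N_3N_4^3N_2&0\\ N_3N_5^2N_4N_1&0&0\end{pmatrix}. \]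
   Context: $S$ is a symmetric $3\times3$ integer matrix with $D=\det S>0$; $S(x)=xSx^t$. Primitive: gcd of entries is $1$; isotropic: $S(x)=0$ for some primitive $x\in\mathbb Z^3$. $S^*=(\det S)S^{-1}$ is the adjugate; $\Omega<0$ is defined by: $-\Omega$ is the gcd of the entries of $S^*$ (the $2\times 2$ minors of $S$); $\Delta=D/\Omega^2$ is a positive integer. $N=\gcd(\Omega,\Delta)>0$. $S$ is special if it is primitive, isotropic, $D>0$ and $N$, $|\Omega|/N$, $\Delta/N$ are square-free. Define positive integers $N_5=\gcd(N,|\Omega|/N)$, $N_4=\gcd(N,\Delta/N)$, $N_3=N/(N_4N_5)$, $N_2=|\Omega|/(NN_5)$, $N_1=\Delta/(NN_4)$; these are square-free, pairwise coprime, $\Omega=-N_5^2N_4N_3N_2$, $\Delta=N_4^2N_5N_3N_1$, $D=N_1N_2^2N_3^3N_4^4N_5^5$. $\mathcal C(S)$ is the set of primitive $x\in\mathbb Z^3$ with $S(x)=0$; $x,x'\in\mathcal C(S)$ are in the same $\mathbb Z$-orbit if $x'=xA^t$ for some $A\in\mathrm{GL}_3(\mathbb Z)$ with $A^tSA=S$. The primitive adjugate of a matrix $T$ of this type is $T^\dagger=T^*/g$ where $T^*$ is its adjugate and $g>0$ is the gcd of the entries of $T^*$ (for $T=S_3$, $g=-\Omega$). *)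

theory Defs
  imports "HOL-Analysis.Analysis" "HOL-Computational_Algebra.Squarefree"
begin

type_synonym mat3 = "int^3^3"
type_synonym vec3 = "int^3"

definition qf :: "mat3 \<Rightarrow> vec3 \<Rightarrow> int" where
  "qf S x = (\<Sum>i\<in>UNIV. \<Sum>j\<in>UNIV. x$i * S$i$j * x$j)"

definition primitive_vec :: "vec3 \<Rightarrow> bool" where
  "primitive_vec x \<longleftrightarrow> Gcd (range (\<lambda>i. x$i)) = 1"

definition entries_gcd :: "mat3 \<Rightarrow> int" where
  "entries_gcd A = Gcd {A$i$j | i j. True}"

definition primitive_mat :: "mat3 \<Rightarrow> bool" where
  "primitive_mat A \<longleftrightarrow> entries_gcd A = 1"

definition isotropic :: "mat3 \<Rightarrow> bool" where
  "isotropic S \<longleftrightarrow> (\<exists>x. primitive_vec x \<and> qf S x = 0)"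

text \<open>Adjugate (transpose of the cofactor matrix) of a 3x3 matrix, written with
  cyclic indices (index arithmetic in the type 3 is mod 3); it equals det(A) A^{-1}.\<close>
definition adj3 :: "mat3 \<Rightarrow> mat3" where
  "adj3 A = (\<chi> i j. A$(j+1)$(i+1) * A$(j+2)$(i+2) - A$(j+1)$(i+2) * A$(j+2)$(i+1))"

definition Omega :: "mat3 \<Rightarrow> int" where
  "Omega S = - entries_gcd (adj3 S)"

definition Delta :: "mat3 \<Rightarrow> int" where
  "Delta S = det S div (Omega S)^2"

definition NN :: "mat3 \<Rightarrow> int" where
  "NN S = gcd (Omega S) (Delta S)"

definition special :: "mat3 \<Rightarrow> bool" where
  "special S \<longleftrightarrow> primitive_mat S \<and> isotropic S \<and> det S > 0 \<and>
     squarefree (NN S) \<and> squarefree (\<bar>Omega S\<bar> div NN S) \<and> squarefree (Delta S div NN S)"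

definition N5 :: "mat3 \<Rightarrow> int" where "N5 S = gcd (NN S) (\<bar>Omega S\<bar> div NN S)"
definition N4 :: "mat3 \<Rightarrow> int" where "N4 S = gcd (NN S) (Delta S div NN S)"
definition N3 :: "mat3 \<Rightarrow> int" where "N3 S = NN S div (N4 S * N5 S)"
definition N2 :: "mat3 \<Rightarrow> int" where "N2 S = \<bar>Omega S\<bar> div (NN S * N5 S)"
definition N1 :: "mat3 \<Rightarrow> int" where "N1 S = Delta S div (NN S * N4 S)"

definition CS :: "mat3 \<Rightarrow> vec3 set" where
  "CS S = {x. primitive_vec x \<and> qf S x = 0}"

text \<open>Same Z-orbit: x' = x A^t (row vectors), i.e. x' = A x (column vectors),
  with A in GL_3(Z) and A^t S A = S.\<close>
definition same_orbit :: "mat3 \<Rightarrow> vec3 \<Rightarrow> vec3 \<Rightarrow> bool" where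
  "same_orbit S x x' \<longleftrightarrow> (\<exists>A::mat3. (det A = 1 \<or> det A = -1) \<and>
      transpose A ** S ** A = S \<and> x' = A *v x)"

definition S3 :: "mat3 \<Rightarrow> int \<Rightarrow> mat3" where
  "S3 S l = vector [
     vector [0, 0, N3 S * N5 S * (N4 S)^2 * N2 S],
     vector [0, - N3 S * (N5 S)^3 * N1 S, 0],
     vector [N3 S * N5 S * (N4 S)^2 * N2 S, 0, N4 S * N2 S * l]]"

definition S3_dagger :: "mat3 \<Rightarrow> int \<Rightarrow> mat3" where
  "S3_dagger S l = vector [
     vector [- l * N5 S * N1 S, 0, N3 S * (N5 S)^2 * N4 S * N1 S],
     vector [0, - N3 S * (N4 S)^3 * N2 S, 0],
     vector [N3 S * (N5 S)^2 * N4 S * N1 S, 0, 0]]"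

definition prim_adj :: "mat3 \<Rightarrow> mat3" where
  "prim_adj T = (\<chi> i j. adj3 T $ i $ j div entries_gcd (adj3 T))"

definition good :: "mat3 \<Rightarrow> vec3 \<Rightarrow> int \<Rightarrow> mat3 \<Rightarrow> bool" where
  "good S x l M \<longleftrightarrow> det M = 1 \<and> column 1 M = x \<and> transpose M ** S ** M = S3 S l"

end

theory Submission
  imports Defs
begin

text \<open>Complete an isotropic primitive \<open>x\<close> to a basis of determinant one; then the first diagonal
  entry vanishes, and a unimodular change of the other two basis vectors brings the form to the
  shape \<open>[[0,0,g],[0,r,s],[g,s,t]]\<close>. Its determinant is \<open>-g\<^sup>2 r = \<Omega>\<^sup>2 \<Delta>\<close> and \<open>\<Omega>\<close> is the gcd of
  \<open>r t - s\<^sup>2, g s, g r, g\<^sup>2\<close>; comparing exponents of each prime, using that \<open>N\<^sub>1 \<dots> N\<^sub>5\<close> are square-free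
  and pairwise coprime, forces \<open>g = N\<^sub>3 N\<^sub>5 N\<^sub>4\<^sup>2 N\<^sub>2\<close>, \<open>r = -N\<^sub>3 N\<^sub>5\<^sup>3 N\<^sub>1\<close> and \<open>gcd g r | s\<close>. A shear
  then clears \<open>s\<close>, and \<open>N\<^sub>4 N\<^sub>2\<close> divides the new corner entry since it divides \<open>\<Omega>\<close> and is coprime to \<open>r\<close>.

  The adjugate of \<open>S\<^sub>3\<close> is \<open>|\<Omega>| S\<^sub>3\<^sup>\<dagger>\<close>; so a prime dividing both \<open>\<ell>\<close> and \<open>N\<close> would divide all entries of
  \<open>S\<^sub>3\<close> or of \<open>S\<^sub>3\<^sup>\<dagger>\<close>, contradicting primitivity of \<open>S\<close> or the definition of \<open>\<Omega>\<close>. Shears preserving the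
  shape of \<open>S\<^sub>3\<close> move \<open>\<ell>\<close> by \<open>N (2v - a\<^sup>2 K)\<close> with \<open>K\<close> odd when \<open>D\<close> is, which realises every residue
  mod \<open>N\<close>; conversely an automorph of \<open>S\<^sub>3\<close> fixing the first basis vector moves \<open>\<ell>\<close> only by a
  multiple of \<open>N\<close>.\<close>

definition m3 :: "int \<Rightarrow> int \<Rightarrow> int \<Rightarrow> int \<Rightarrow> int \<Rightarrow> int \<Rightarrow> int \<Rightarrow> int \<Rightarrow> int \<Rightarrow> mat3" where
  "m3 a b c d e f g h i = vector [vector [a,b,c], vector [d,e,f], vector [g,h,i]]"

lemma m3_nth [simp]:
  "m3 a b c d e f g h i $ 1 $ 1 = a" "m3 a b c d e f g h i $ 1 $ 2 = b" "m3 a b c d e f g h i $ 1 $ 3 = c"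
  "m3 a b c d e f g h i $ 2 $ 1 = d" "m3 a b c d e f g h i $ 2 $ 2 = e" "m3 a b c d e f g h i $ 2 $ 3 = f"
  "m3 a b c d e f g h i $ 3 $ 1 = g" "m3 a b c d e f g h i $ 3 $ 2 = h" "m3 a b c d e f g h i $ 3 $ 3 = i"
  by (simp_all add: m3_def)

lemma m3_entries: "A = m3 (A$1$1) (A$1$2) (A$1$3) (A$2$1) (A$2$2) (A$2$3) (A$3$1) (A$3$2) (A$3$3)"
  by (simp add: vec_eq_iff forall_3)

lemma m3_cases: obtains a b c d e f g h i where "A = m3 a b c d e f g h i"
  using m3_entries by blast

lemma m3_eq_iff: "m3 a b c d e f g h i = m3 a' b' c' d' e' f' g' h' i' \<longleftrightarrow>
   a = a' \<and> b = b' \<and> c = c' \<and> d = d' \<and> e = e' \<and> f = f' \<and> g = g' \<and> h = h' \<and> i = i'"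
  by (auto simp: vec_eq_iff forall_3 m3_def)

lemma m3_mult: "m3 a b c d e f g h i ** m3 a' b' c' d' e' f' g' h' i' =
  m3 (a*a'+b*d'+c*g') (a*b'+b*e'+c*h') (a*c'+b*f'+c*i')
     (d*a'+e*d'+f*g') (d*b'+e*e'+f*h') (d*c'+e*f'+f*i')
     (g*a'+h*d'+i*g') (g*b'+h*e'+i*h') (g*c'+h*f'+i*i')"
  by (simp add: vec_eq_iff forall_3 matrix_matrix_mult_def sum_3)

lemma m3_transpose: "transpose (m3 a b c d e f g h i) = m3 a d g b e h c f i"
  by (simp add: vec_eq_iff forall_3 transpose_def)

lemma m3_det: "det (m3 a b c d e f g h i) = a*e*i - a*f*h - b*d*i + b*f*g + c*d*h - c*e*g"
  by (simp add: det_3 algebra_simps)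

lemma m3_adj: "adj3 (m3 a b c d e f g h i) =
   m3 (e*i - f*h) (c*h - b*i) (b*f - c*e)
      (f*g - d*i) (a*i - c*g) (c*d - a*f)
      (d*h - e*g) (b*g - a*h) (a*e - b*d)"
proof -
  have idx: "(4::3) = 1" "(5::3) = 2" "(6::3) = 3" by simp_all
  show ?thesis by (simp add: idx vec_eq_iff forall_3 adj3_def algebra_simps)
qed

lemma m3_mat: "(mat k :: mat3) = m3 k 0 0 0 k 0 0 0 k"
  by (simp add: vec_eq_iff forall_3 mat_def)

lemma adj3_mult: "adj3 (A ** B) = adj3 B ** adj3 A"
proof -
  obtain a b c d e f g h i where A: "A = m3 a b c d e f g h i" by (rule m3_cases)
  obtain a' b' c' d' e' f' g' h' i' where B: "B = m3 a' b' c' d' e' f' g' h' i'" by (rule m3_cases)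
  show ?thesis unfolding A B m3_mult m3_adj m3_eq_iff by (simp add: algebra_simps)
qed

lemma adj3_transpose: "adj3 (transpose A) = transpose (adj3 A)"
proof -
  obtain a b c d e f g h i where A: "A = m3 a b c d e f g h i" by (rule m3_cases)
  show ?thesis unfolding A m3_transpose m3_adj m3_eq_iff by (simp add: algebra_simps)
qed

lemma mult_adj3: "A ** adj3 A = mat (det A)"
proof -
  obtain a b c d e f g h i where A: "A = m3 a b c d e f g h i" by (rule m3_cases)
  show ?thesis unfolding A m3_mult m3_adj m3_mat m3_det m3_eq_iff by (simp add: algebra_simps)
qed

lemma adj3_mult_self: "adj3 A ** A = mat (det A)"
proof -
  obtain a b c d e f g h i where A: "A = m3 a b c d e f g h i" by (rule m3_cases)
  show ?thesis unfolding A m3_mult m3_adj m3_mat m3_det m3_eq_iff by (simp add: algebra_simps)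
qed

lemma adj3_adj3: "adj3 (adj3 A) = mat (det A) ** A"
proof -
  obtain a b c d e f g h i where A: "A = m3 a b c d e f g h i" by (rule m3_cases)
  show ?thesis unfolding A m3_mult m3_adj m3_mat m3_det m3_eq_iff by (simp add: algebra_simps)
qed

lemma det_adj3: "det (adj3 A) = det A ^ 2"
proof -
  obtain a b c d e f g h i where A: "A = m3 a b c d e f g h i" by (rule m3_cases)
  show ?thesis unfolding A m3_adj m3_det by (simp add: algebra_simps power2_eq_square)
qed

lemma congruence_mult:
  fixes A B S :: mat3
  shows "transpose (A ** B) ** S ** (A ** B) = transpose B ** (transpose A ** S ** A) ** B"
  by (simp add: matrix_transpose_mul matrix_mul_assoc)

lemma column1_mult: "column 1 (A ** B :: mat3) = A *v column 1 B"
  by (simp add: column_def matrix_matrix_mult_def matrix_vector_mult_def vec_eq_iff)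

lemma column1_mult_unipotent:
  "column 1 (A ** m3 1 u v 0 p q 0 r w) = column 1 A"
  by (simp add: column_def matrix_matrix_mult_def sum_3 vec_eq_iff m3_def)

lemma congruence_1_1_qf: "(transpose M ** S ** M) $ 1 $ 1 = qf S (column 1 M)"
  unfolding qf_def
  by (simp add: matrix_matrix_mult_def transpose_def column_def sum_3 algebra_simps)

lemma entries_gcd_dvd: "entries_gcd A dvd A$i$j"
  unfolding entries_gcd_def by (rule Gcd_dvd) blast

lemma entries_gcd_greatest: "(\<And>i j. d dvd A$i$j) \<Longrightarrow> d dvd entries_gcd A"
  unfolding entries_gcd_def by (rule Gcd_greatest) blast

lemma entries_gcd_nonneg: "entries_gcd A \<ge> 0"
  unfolding entries_gcd_def by simp

lemma entries_gcd_dvd_mult: "entries_gcd A dvd entries_gcd (B ** A ** C)"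
  by (intro entries_gcd_greatest) (simp add: matrix_matrix_mult_def dvd_sum entries_gcd_dvd)

lemma entries_gcd_congruence:
  assumes "det P = 1" shows "entries_gcd (transpose P ** A ** P) = entries_gcd A"
proof (rule zdvd_antisym_nonneg[OF entries_gcd_nonneg entries_gcd_nonneg])
  have "transpose (adj3 P) ** (transpose P ** A ** P) ** adj3 P = A"
    unfolding congruence_mult[symmetric] using assms by (simp add: mult_adj3)
  then show "entries_gcd (transpose P ** A ** P) dvd entries_gcd A"
    by (metis entries_gcd_dvd_mult)
qed (rule entries_gcd_dvd_mult)

lemma entries_gcd_adj3_congruence:
  assumes "det P = 1"
  shows "entries_gcd (adj3 (transpose P ** A ** P)) = entries_gcd (adj3 A)"
proof -
  have "adj3 (transpose P ** A ** P) = transpose (transpose (adj3 P)) ** adj3 A ** transpose (adj3 P)"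
    by (simp add: adj3_mult adj3_transpose matrix_mul_assoc)
  moreover have "det (transpose (adj3 P)) = 1" using assms by (simp add: det_transpose det_adj3)
  ultimately show ?thesis by (simp only: entries_gcd_congruence)
qed

text \<open>The square of the gcd of the minors divides every entry of \<open>adj3 (adj3 S) = det S \<cdot> S\<close>.\<close>
lemma entries_gcd_adj3_square_dvd_det:
  assumes "primitive_mat S" shows "(entries_gcd (adj3 S))^2 dvd det S"
proof -
  let ?W = "entries_gcd (adj3 S)"
  have "?W^2 dvd adj3 (adj3 S) $ i $ j" for i j
    unfolding adj3_def[of "adj3 S"] vec_lambda_beta power2_eq_square
    by (intro dvd_diff mult_dvd_mono entries_gcd_dvd)
  moreover have "(mat k ** A :: mat3)$i$j = k * A$i$j" for k A i j
    using exhaust_3[of i] by (auto simp: matrix_matrix_mult_def mat_def sum_3)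
  ultimately have "?W^2 dvd det S * S$i$j" for i j
    by (metis adj3_adj3)
  then have "?W^2 dvd Gcd ((*) (det S) ` {S$i$j | i j. True})"
    by (intro Gcd_greatest) auto
  also have "\<dots> = normalize (det S * entries_gcd S)"
    unfolding entries_gcd_def by (rule Gcd_mult)
  finally show ?thesis using assms by (simp add: primitive_mat_def)
qed

lemma symmetric_entry: "transpose A = A \<Longrightarrow> A$i$j = A$j$i"
  by (metis transpose_def vec_lambda_beta)

lemma prime_multiplicity_mult:
  "prime (p::int) \<Longrightarrow> x \<noteq> 0 \<Longrightarrow> y \<noteq> 0 \<Longrightarrow> multiplicity p (x * y) = multiplicity p x + multiplicity p y"
  by (rule prime_elem_multiplicity_mult_distrib) auto

lemma squarefree_mult_imp_coprime:
  fixes a b :: int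
  assumes "squarefree (a * b)" shows "coprime a b"
proof (rule coprimeI)
  fix d assume "d dvd a" "d dvd b"
  then have "d^2 dvd a * b" by (simp add: power2_eq_square mult_dvd_mono)
  then show "is_unit d" using assms by (rule squarefreeD[rotated])
qed

lemma squarefree_prod5_iff:
  fixes n1 n2 n3 n4 n5 :: int
  assumes "n1 \<noteq> 0" "n2 \<noteq> 0" "n3 \<noteq> 0" "n4 \<noteq> 0" "n5 \<noteq> 0"
  shows "squarefree (n1*n2*n3*n4*n5) \<longleftrightarrow> (\<forall>p. prime p \<longrightarrow>
    multiplicity p n1 + multiplicity p n2 + multiplicity p n3 + multiplicity p n4 + multiplicity p n5 \<le> 1)"
proof -
  have "multiplicity p (n1*n2*n3*n4*n5) =
      multiplicity p n1 + multiplicity p n2 + multiplicity p n3 + multiplicity p n4 + multiplicity p n5"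
    if "prime p" for p
    using assms that by (simp add: prime_multiplicity_mult)
  then show ?thesis using assms by (simp add: squarefree_factorial_semiring'')
qed

lemma prime_multiplicity_pos:
  fixes p x :: int
  assumes "prime p" "p dvd x" "x \<noteq> 0" shows "1 \<le> multiplicity p x"
  using assms power_dvd_iff_le_multiplicity[where p=p and n=1 and x=x] prime_gt_1_int[of p] by simp

lemma gcd_cofactor_split:
  fixes W Dl n n1 n2 n3 n4 n5 :: int
  assumes W: "W > 0" and Dl: "Dl > 0" and n: "n = gcd W Dl"
    and n5: "n5 = gcd n (W div n)" and n4: "n4 = gcd n (Dl div n)"
    and n3: "n3 = n div (n4*n5)" and n2: "n2 = W div (n*n5)" and n1: "n1 = Dl div (n*n4)"
  shows "n = n4*n5*n3" "W = n*n5*n2" "Dl = n*n4*n1" "n1 > 0" "n2 > 0" "n3 > 0" "n4 > 0" "n5 > 0"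
proof -
  have n0: "n > 0" unfolding n using W by simp
  have nd: "n dvd W" "n dvd Dl" unfolding n by simp_all
  have n5p: "n5 > 0" and n4p: "n4 > 0" unfolding n5 n4 using n0 by simp_all
  have "coprime n4 n5"
  proof (rule coprimeI)
    fix d assume "d dvd n4" "d dvd n5"
    then have "d dvd W div n" "d dvd Dl div n" unfolding n4 n5 by (auto intro: dvd_trans)
    then have "d * n dvd W" "d * n dvd Dl" using n0 nd by (simp_all add: dvd_div_iff_mult)
    then have "d * n dvd 1 * n" unfolding n by simp
    then show "is_unit d" using n0 by (subst (asm) dvd_mult_cancel_right) auto
  qed
  then have "n4*n5 dvd n" unfolding n4 n5 by (simp add: divides_mult)
  moreover have "n5*n dvd W" "n4*n dvd Dl" unfolding n5 n4
    using n0 nd by (simp_all add: dvd_div_iff_mult[symmetric])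
  ultimately show eqs: "n = n4*n5*n3" "W = n*n5*n2" "Dl = n*n4*n1"
    unfolding n3 n2 n1 by (simp_all add: mult.commute)
  show "n3 > 0" "n2 > 0" "n1 > 0" using eqs W Dl n0 n4p n5p by (metis mult_pos_pos zero_less_mult_pos)+
  show "n4 > 0" "n5 > 0" using n4p n5p by simp_all
qed

lemma gcd_cofactor_squarefree:
  fixes n n1 n2 n3 n4 n5 :: int
  assumes pos: "n1 > 0" "n2 > 0" "n3 > 0" "n4 > 0" "n5 > 0"
    and n: "n = n4*n5*n3" and n_gcd: "gcd (n*(n5*n2)) (n*(n4*n1)) = n"
    and n5: "n5 = gcd n (n5*n2)" and n4: "n4 = gcd n (n4*n1)"
    and sqf: "squarefree n" "squarefree (n5*n2)" "squarefree (n4*n1)"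
  shows "squarefree (n1*n2*n3*n4*n5)"
proof -
  have n0: "n > 0" using n pos by simp
  have "multiplicity p n1 + multiplicity p n2 + multiplicity p n3 + multiplicity p n4 + multiplicity p n5 \<le> 1"
    if p: "prime p" for p
  proof -
    define a1 a2 a3 a4 a5 where "a1 = multiplicity p n1" "a2 = multiplicity p n2"
      "a3 = multiplicity p n3" "a4 = multiplicity p n4" "a5 = multiplicity p n5"
    have vn: "multiplicity p n = a3 + a4 + a5" and vw: "multiplicity p (n5*n2) = a5 + a2"
      and vd: "multiplicity p (n4*n1) = a4 + a1"
      unfolding a1_a2_a3_a4_a5_def n using p pos by (simp_all add: prime_multiplicity_mult)
    have "a3 + a4 + a5 \<le> 1" "a5 + a2 \<le> 1" "a4 + a1 \<le> 1"
      using sqf p vn vw vd by (metis squarefree_factorial_semiring'' not_squarefree_0)+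
    moreover have "a5 = min (a3+a4+a5) (a5+a2)" "a4 = min (a3+a4+a5) (a4+a1)"
      using multiplicity_gcd[of n "n5*n2" p] multiplicity_gcd[of n "n4*n1" p] p n0 pos vn vw vd
      unfolding a1_a2_a3_a4_a5_def by (simp_all flip: n5 n4)
    moreover have "min (a5+a2) (a4+a1) = 0"
      using multiplicity_gcd[of "n*(n5*n2)" "n*(n4*n1)" p] p n0 pos vn vw vd
      by (simp add: n_gcd prime_multiplicity_mult)
    ultimately show ?thesis unfolding a1_a2_a3_a4_a5_def[symmetric] by (simp add: min_def split: if_splits)
  qed
  then show ?thesis using pos by (simp add: squarefree_prod5_iff)
qed

lemma squarefree_prod5_coprime:
  fixes n1 n2 n3 n4 n5 :: int
  assumes "squarefree (n1*n2*n3*n4*n5)"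
  shows "coprime (n4^i * n2) (n3 * n5^k * n1)"
proof -
  have "squarefree ((n4*n2) * (n3*n5*n1))" using assms by (simp add: ac_simps)
  then have "coprime (n4*n2) (n3*n5*n1)" by (rule squarefree_mult_imp_coprime)
  then show ?thesis by (cases "i = 0"; cases "k = 0") (auto simp: coprime_mult_left_iff coprime_mult_right_iff)
qed

lemma special_invariants:
  assumes sp: "special S"
  defines "W \<equiv> entries_gcd (adj3 S)"
  shows "det S = W^2 * Delta S \<and> W = (N5 S)^2 * N4 S * N3 S * N2 S \<and> Delta S = (N4 S)^2 * N5 S * N3 S * N1 S \<and>
    NN S = N3 S * N4 S * N5 S \<and> N1 S > 0 \<and> N2 S > 0 \<and> N3 S > 0 \<and> N4 S > 0 \<and> N5 S > 0 \<and>
    squarefree (N1 S * N2 S * N3 S * N4 S * N5 S)"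
proof -
  have prim: "primitive_mat S" and dpos: "det S > 0"
    and sq: "squarefree (NN S)" "squarefree (\<bar>Omega S\<bar> div NN S)" "squarefree (Delta S div NN S)"
    using sp unfolding special_def by auto
  have "W \<noteq> 0"
  proof
    assume "W = 0"
    then have "adj3 S = mat 0" using entries_gcd_dvd[of "adj3 S"] by (simp add: W_def vec_eq_iff mat_def)
    then have "mat (det S) = (mat 0 :: mat3)" using mult_adj3[of S] by simp
    then have "det S = 0" by (simp add: m3_mat m3_eq_iff)
    then show False using dpos by simp
  qed
  then have Wp: "W > 0" using entries_gcd_nonneg[of "adj3 S"] unfolding W_def by simp
  have detE: "det S = W^2 * Delta S"
    using entries_gcd_adj3_square_dvd_det[OF prim] unfolding Delta_def Omega_def W_def by simp
  then have Dp: "Delta S > 0" using dpos Wp by (simp add: zero_less_mult_iff)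
  have absO: "\<bar>Omega S\<bar> = W" and NNE: "NN S = gcd W (Delta S)"
    using Wp unfolding NN_def Omega_def W_def by simp_all
  have Ns: "N5 S = gcd (NN S) (W div NN S)" "N4 S = gcd (NN S) (Delta S div NN S)"
    "N3 S = NN S div (N4 S * N5 S)" "N2 S = W div (NN S * N5 S)" "N1 S = Delta S div (NN S * N4 S)"
    unfolding N5_def N4_def N3_def N2_def N1_def absO by simp_all
  note split = gcd_cofactor_split(1-3)[OF Wp Dp NNE Ns]
    and pos = gcd_cofactor_split(4-8)[OF Wp Dp NNE Ns]
  have WD: "W = NN S * (N5 S * N2 S)" "Delta S = NN S * (N4 S * N1 S)"
    using split(2,3) by (simp_all only: mult.assoc)
  have "NN S \<noteq> 0" using NNE Wp by simp
  then have quot: "W div NN S = N5 S * N2 S" "Delta S div NN S = N4 S * N1 S"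
    unfolding WD by simp_all
  have "squarefree (N1 S * N2 S * N3 S * N4 S * N5 S)"
  proof (rule gcd_cofactor_squarefree[OF pos split(1)])
    show "gcd (NN S * (N5 S * N2 S)) (NN S * (N4 S * N1 S)) = NN S"
      using NNE WD by metis
    show "N5 S = gcd (NN S) (N5 S * N2 S)" "N4 S = gcd (NN S) (N4 S * N1 S)"
      by (fact Ns(1,2)[unfolded quot])+
    show "squarefree (NN S)" "squarefree (N5 S * N2 S)" "squarefree (N4 S * N1 S)"
      by (fact sq[unfolded absO quot])+
  qed
  moreover have "W = (N5 S)^2 * N4 S * N3 S * N2 S" "Delta S = (N4 S)^2 * N5 S * N3 S * N1 S"
    unfolding split(2,3) split(1) by (simp_all add: power2_eq_square mult_ac)
  ultimately show ?thesis using detE split(1) pos by (simp add: mult_ac)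
qed

lemma primitive_vec_gcd: "primitive_vec x \<Longrightarrow> gcd (x$1) (gcd (x$2) (x$3)) = 1"
  unfolding primitive_vec_def by (simp add: UNIV_3 image_insert)

text \<open>For \<open>x = (a, b, c)\<close>, \<open>d = gcd a b\<close>, \<open>a = d a\<^sub>1\<close>, \<open>b = d a\<^sub>2\<close>, \<open>u a\<^sub>1 + v a\<^sub>2 = 1\<close> and \<open>p d + q c = 1\<close>,
  the columns \<open>x\<close>, \<open>(-v, u, 0)\<close>, \<open>(-q a\<^sub>1, -q a\<^sub>2, p)\<close> have determinant \<open>(p d + q c)(u a\<^sub>1 + v a\<^sub>2)\<close>.\<close>
lemma primitive_vec_column_SL3:
  assumes "primitive_vec x"
  obtains P where "det P = 1" "column 1 P = x"
proof -
  define a b c where "a = x$1" "b = x$2" "c = x$3"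
  define d where "d = gcd a b"
  have dc: "gcd d c = 1" using primitive_vec_gcd[OF assms] unfolding a_b_c_def d_def
    by (simp add: gcd.assoc)
  obtain a1 a2 u v where ab: "a = d*a1" "b = d*a2" "u*a1 + v * a2 = 1"
  proof (cases "d = 0")
    case True
    then show ?thesis using that[of 1 0 1 0] unfolding d_def by simp
  next
    case False
    then have "coprime (a div d) (b div d)" unfolding d_def by (intro div_gcd_coprime) auto
    then obtain u v where "u * (a div d) + v * (b div d) = 1"
      using bezout_int[of "a div d" "b div d"] by (auto simp: coprime_iff_gcd_eq_1)
    then show ?thesis using that[of "a div d" "b div d"] unfolding d_def by simp
  qed
  obtain p q where pq: "p*d + q*c = 1" using bezout_int[of d c] dc by auto
  define P where "P = m3 a (-v) (-q*a1) b u (-q*a2) c 0 p"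
  have "det P = (p*d + q*c) * (u*a1 + v * a2)"
    unfolding P_def m3_det ab(1,2) by (simp add: algebra_simps)
  then have "det P = 1" using ab(3) pq by simp
  moreover have "column 1 P = x"
    unfolding P_def column_def a_b_c_def by (simp add: vec_eq_iff forall_3)
  ultimately show ?thesis by (rule that)
qed

definition normal_form :: "int \<Rightarrow> int \<Rightarrow> int \<Rightarrow> int \<Rightarrow> mat3" where
  "normal_form g r s t = m3 0 0 g 0 r s g s t"

lemma S3_normal_form:
  "S3 S l = normal_form (N3 S * N5 S * (N4 S)^2 * N2 S) (- N3 S * (N5 S)^3 * N1 S) 0 (N4 S * N2 S * l)"
  unfolding S3_def normal_form_def m3_def ..

lemma normal_form_shear:
  "transpose (m3 1 u v 0 1 w 0 0 1) ** normal_form g r s t ** m3 1 u v 0 1 w 0 0 1 =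
     normal_form g r (s + u*g + w*r) (t + 2 * v * g + 2*w * s + w^2*r)"
  unfolding normal_form_def m3_transpose m3_mult m3_eq_iff by (simp add: algebra_simps power2_eq_square)

lemma det_normal_form: "det (normal_form g r s t) = - g*g*r"
  unfolding normal_form_def m3_det by (simp add: algebra_simps)

lemma adj3_normal_form:
  "adj3 (normal_form g r s t) = m3 (r*t - s * s) (g * s) (- (g*r)) (g * s) (- (g*g)) 0 (- (g*r)) 0 0"
  unfolding normal_form_def m3_adj by (simp add: algebra_simps)

text \<open>With \<open>g = gcd p q\<close>, \<open>p = g p'\<close>, \<open>q = g q'\<close> and \<open>u p' + v q' = 1\<close>, the new second basis vector
  \<open>(0, q', -p')\<close> is orthogonal to the first, while the third, \<open>(0, u, v)\<close>, pairs with the first to \<open>g\<close>.\<close>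
lemma isotropic_corner_reduction:
  fixes p q e f h :: int
  assumes "det (m3 0 p q p e f q f h) \<noteq> 0"
  obtains Q g r s t where "det Q = 1" "column 1 Q = column 1 (mat 1)" "g > 0"
    "transpose Q ** m3 0 p q p e f q f h ** Q = normal_form g r s t"
proof -
  define g where "g = gcd p q"
  have "p \<noteq> 0 \<or> q \<noteq> 0" using assms by (auto simp: m3_det)
  then have g0: "g > 0" and "coprime (p div g) (q div g)" unfolding g_def by (auto intro: div_gcd_coprime)
  then obtain u v where uv: "u * (p div g) + v * (q div g) = 1"
    using bezout_int[of "p div g" "q div g"] by (auto simp: coprime_iff_gcd_eq_1)
  define p' q' where "p' = p div g" "q' = q div g"
  have pq: "p = g*p'" "q = g*q'" unfolding g_def p'_q'_def by simp_all
  define Q where "Q = m3 1 0 0 0 q' u 0 (-p') v"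
  have "det Q = 1" unfolding Q_def m3_det using uv by (simp add: p'_q'_def algebra_simps)
  moreover have "column 1 Q = column 1 (mat 1)"
    unfolding Q_def column_def by (simp add: vec_eq_iff forall_3 mat_def)
  moreover have "transpose Q ** m3 0 p q p e f q f h ** Q =
     normal_form g (q'*(e*q' - f*p') - p'*(f*q' - h*p')) (u*(e*q' - f*p') + v * (f*q' - h*p'))
        (u*(e*u + f * v) + v * (f*u + h * v))"
    unfolding Q_def normal_form_def m3_transpose m3_mult m3_eq_iff pq
    using uv[folded p'_q'_def] by (simp add: algebra_simps) (metis distrib_left mult.assoc mult.commute mult_1_right)
  ultimately show ?thesis using g0 that by blast
qed

lemma entries_gcd_3: "entries_gcd A = Gcd {A$1$1, A$1$2, A$1$3, A$2$1, A$2$2, A$2$3, A$3$1, A$3$2, A$3$3}"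
proof -
  have "{A$i$j | i j. True} = {A$1$1, A$1$2, A$1$3, A$2$1, A$2$2, A$2$3, A$3$1, A$3$2, A$3$3}"
  proof (intro set_eqI iffI)
    fix y assume "y \<in> {A$i$j | i j. True}"
    then obtain i j where "y = A$i$j" by blast
    then show "y \<in> {A$1$1, A$1$2, A$1$3, A$2$1, A$2$2, A$2$3, A$3$1, A$3$2, A$3$3}"
      using exhaust_3[of i] exhaust_3[of j] by auto
  qed blast
  then show ?thesis unfolding entries_gcd_def by (simp only:)
qed

lemma entries_gcd_m3: "entries_gcd (m3 a b c d e f g h i) = Gcd {a, b, c, d, e, f, g, h, i}"
  by (simp only: entries_gcd_3 m3_nth)

lemma entries_gcd_adj3_normal_form:
  "entries_gcd (adj3 (normal_form g r s t)) = gcd (r*t - s * s) (gcd (g * s) (gcd (g*r) (g*g)))"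
  unfolding adj3_normal_form entries_gcd_m3 by (simp add: gcd.assoc gcd.left_commute gcd.commute)

lemma normal_form_local_constraints:
  fixes g r s t W p :: int
  assumes p: "prime p" and g: "g \<noteq> 0" and r: "r \<noteq> 0"
    and W: "W = gcd (r*t - s * s) (gcd (g * s) (gcd (g*r) (g*g)))"
    and prim: "\<not> (p dvd g \<and> p dvd r \<and> p dvd s \<and> p dvd t)"
  defines "\<gamma> \<equiv> multiplicity p g" and "\<rho> \<equiv> multiplicity p r" and "\<omega> \<equiv> multiplicity p W"
  shows "\<omega> \<le> 2*\<gamma>"
    and "1 \<le> \<rho> \<and> \<not> p dvd s \<longrightarrow> \<omega> = 0"
    and "\<gamma> = 2 \<and> \<rho> = 1 \<and> p dvd s \<longrightarrow> \<omega> \<le> 1"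
    and "\<gamma> = 1 \<and> \<rho> = 2 \<and> p dvd s \<longrightarrow> 2 \<le> \<omega>"
proof -
  have W0: "W \<noteq> 0" using W g by simp
  have le_mult: "n \<le> multiplicity p x \<longleftrightarrow> p^n dvd x" if "x \<noteq> 0" for n x
    using power_dvd_iff_le_multiplicity[of x p n] that prime_gt_1_int[OF p] by simp
  have Wd: "W dvd r*t - s * s" "W dvd g*g"
    unfolding W by (rule gcd_dvd1, rule dvd_trans[OF gcd_dvd2 dvd_trans[OF gcd_dvd2 gcd_dvd2]])
  show "\<omega> \<le> 2*\<gamma>"
    using dvd_imp_multiplicity_le[OF Wd(2), of p] g p unfolding \<omega>_def \<gamma>_def by (simp add: prime_multiplicity_mult)
  show "1 \<le> \<rho> \<and> \<not> p dvd s \<longrightarrow> \<omega> = 0"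
  proof
    assume "1 \<le> \<rho> \<and> \<not> p dvd s"
    then have "p dvd r" "\<not> p dvd s * s" using le_mult[OF r, of 1] p unfolding \<rho>_def by (auto simp: prime_dvd_mult_iff)
    then have "\<not> p dvd r*t - s * s" using dvd_diff[of p "r*t" "r*t - s * s"] by auto
    then have "\<not> p dvd W" using Wd(1) dvd_trans by blast
    then show "\<omega> = 0" unfolding \<omega>_def by (rule not_dvd_imp_multiplicity_0)
  qed
  show "\<gamma> = 2 \<and> \<rho> = 1 \<and> p dvd s \<longrightarrow> \<omega> \<le> 1"
  proof
    assume h: "\<gamma> = 2 \<and> \<rho> = 1 \<and> p dvd s"
    then have "p dvd g" "p dvd r" "\<not> p^2 dvd r" using le_mult[OF g, of 1] le_mult[OF r, of 1] le_mult[OF r, of 2]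
      unfolding \<gamma>_def \<rho>_def by auto
    then have "\<not> p dvd t" using prim h by blast
    moreover from this have "t \<noteq> 0" by auto
    ultimately have "multiplicity p (r*t) = 1"
      using h p r unfolding \<rho>_def by (simp add: prime_multiplicity_mult not_dvd_imp_multiplicity_0)
    then have "\<not> p^2 dvd r*t" using le_mult[of "r*t" 2] r by fastforce
    moreover have "p^2 dvd s * s" using h by (simp add: power2_eq_square mult_dvd_mono)
    ultimately have "\<not> p^2 dvd r*t - s * s" using dvd_add[of "p^2" "r*t - s * s" "s * s"] by auto
    then have "\<not> p^2 dvd W" using Wd(1) dvd_trans by blast
    then show "\<omega> \<le> 1" using le_mult[OF W0, of 2] unfolding \<omega>_def by simp
  qed
  show "\<gamma> = 1 \<and> \<rho> = 2 \<and> p dvd s \<longrightarrow> 2 \<le> \<omega>"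
  proof
    assume h: "\<gamma> = 1 \<and> \<rho> = 2 \<and> p dvd s"
    then have "p dvd g" "p^2 dvd r" using le_mult[OF g, of 1] le_mult[OF r, of 2] unfolding \<gamma>_def \<rho>_def by auto
    moreover have "p^2 dvd s * s" "p^2 dvd g * s" "p^2 dvd g * g"
      using \<open>p dvd g\<close> h by (simp_all add: power2_eq_square mult_dvd_mono)
    ultimately have "p^2 dvd r*t - s * s" "p^2 dvd g * s" "p^2 dvd g*r" "p^2 dvd g*g"
      by (simp_all add: dvd_diff dvd_mult)
    then have "p^2 dvd W" unfolding W by simp
    then show "2 \<le> \<omega>" using le_mult[OF W0, of 2] unfolding \<omega>_def by simp
  qed
qed

text \<open>The exponents of a prime in \<open>N\<^sub>1, \<dots>, N\<^sub>5\<close> are \<open>a\<^sub>1, \<dots>, a\<^sub>5\<close> and those in \<open>g, r, \<Omega>\<close> are \<open>\<gamma>, \<rho>, \<omega>\<close>;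
  \<open>ps\<close> says that the prime divides \<open>s\<close>. The hypotheses are those of \<open>normal_form_local_constraints\<close>
  together with \<open>v\<^sub>p(g\<^sup>2 r) = v\<^sub>p(\<Omega>\<^sup>2 \<Delta>)\<close>.\<close>
lemma local_exponents:
  fixes a1 a2 a3 a4 a5 \<gamma> \<rho> \<omega> :: nat and ps :: bool
  assumes "a1+a2+a3+a4+a5 \<le> 1" "\<omega> = 2*a5+a4+a3+a2"
    "2*\<gamma>+\<rho> = 2*\<omega>+(2*a4+a5+a3+a1)" "\<omega> \<le> 2*\<gamma>"
    "1 \<le> \<rho> \<and> \<not>ps \<longrightarrow> \<omega> = 0" "\<gamma> = 2 \<and> \<rho> = 1 \<and> ps \<longrightarrow> \<omega> \<le> 1"
    "\<gamma> = 1 \<and> \<rho> = 2 \<and> ps \<longrightarrow> 2 \<le> \<omega>"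
  shows "\<gamma> = a3+a5+2*a4+a2 \<and> \<rho> = a3+3*a5+a1 \<and> (1 \<le> min \<gamma> \<rho> \<longrightarrow> ps \<and> min \<gamma> \<rho> = 1)"
proof -
  have "a1 \<le> 1" "a2 \<le> 1" "a3 \<le> 1" "a4 \<le> 1" "a5 \<le> 1" using assms(1) by linarith+
  then consider "a1 = 1" "a2 = 0" "a3 = 0" "a4 = 0" "a5 = 0" | "a1 = 0" "a2 = 1" "a3 = 0" "a4 = 0" "a5 = 0"
    | "a1 = 0" "a2 = 0" "a3 = 1" "a4 = 0" "a5 = 0" | "a1 = 0" "a2 = 0" "a3 = 0" "a4 = 1" "a5 = 0"
    | "a1 = 0" "a2 = 0" "a3 = 0" "a4 = 0" "a5 = 1" | "a1 = 0" "a2 = 0" "a3 = 0" "a4 = 0" "a5 = 0"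
    using assms(1) by (simp add: le_Suc_eq) linarith
  then show ?thesis using assms(2-) by cases (cases ps; auto; presburger)+
qed

lemma normal_form_coefficients:
  fixes g r s t W Dl n1 n2 n3 n4 n5 :: int
  assumes g0: "g > 0" and r0: "r < 0"
    and W: "W = gcd (r*t - s * s) (gcd (g * s) (gcd (g*r) (g*g)))"
    and prim: "\<And>p. prime p \<Longrightarrow> \<not> (p dvd g \<and> p dvd r \<and> p dvd s \<and> p dvd t)"
    and det: "g*g*(-r) = W^2 * Dl"
    and pos: "n1 > 0" "n2 > 0" "n3 > 0" "n4 > 0" "n5 > 0"
    and We: "W = n5^2*n4*n3*n2" and De: "Dl = n4^2*n5*n3*n1"
    and sqf: "squarefree (n1*n2*n3*n4*n5)"
  shows "g = n3*n5*n4^2*n2 \<and> r = - (n3*n5^3*n1) \<and> gcd g r dvd s"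
proof -
  have local: "multiplicity p g = multiplicity p (n3*n5*n4^2*n2)
      \<and> multiplicity p (-r) = multiplicity p (n3*n5^3*n1)
      \<and> (s \<noteq> 0 \<longrightarrow> min (multiplicity p g) (multiplicity p r) \<le> multiplicity p s)" if p: "prime p" for p
  proof -
    define a1 a2 a3 a4 a5 where "a1 = multiplicity p n1" "a2 = multiplicity p n2"
      "a3 = multiplicity p n3" "a4 = multiplicity p n4" "a5 = multiplicity p n5"
    have mult: "multiplicity p (x * y) = multiplicity p x + multiplicity p y" if "x \<noteq> 0" "y \<noteq> 0" for x y
      using p that by (rule prime_multiplicity_mult)
    have pow: "multiplicity p (x ^ k) = k * multiplicity p x" if "x \<noteq> 0" for x k
      using p that by (intro prime_elem_multiplicity_power_distrib) auto
    have "2 * multiplicity p g + multiplicity p r = 2 * multiplicity p W + (2*a4+a5+a3+a1)"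
    proof -
      have "multiplicity p (g*g*(-r)) = multiplicity p (W^2 * Dl)" using det by simp
      then show ?thesis using g0 r0 pos unfolding We De a1_a2_a3_a4_a5_def by (simp add: mult pow)
    qed
    moreover have "multiplicity p W = 2*a5+a4+a3+a2"
      using pos unfolding We a1_a2_a3_a4_a5_def by (simp add: mult pow)
    moreover have "a1+a2+a3+a4+a5 \<le> 1"
      using sqf pos p unfolding a1_a2_a3_a4_a5_def by (simp add: squarefree_prod5_iff)
    moreover note normal_form_local_constraints[OF p _ _ W prim[OF p]]
    ultimately have "multiplicity p g = a3+a5+2*a4+a2 \<and> multiplicity p r = a3+3*a5+a1 \<and>
        (1 \<le> min (multiplicity p g) (multiplicity p r) \<longrightarrow> p dvd s \<and> min (multiplicity p g) (multiplicity p r) = 1)"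
      using g0 r0 by (intro local_exponents) auto
    moreover have "1 \<le> multiplicity p s" if "p dvd s" "s \<noteq> 0" using p that by (rule prime_multiplicity_pos)
    ultimately show ?thesis using pos unfolding a1_a2_a3_a4_a5_def by (auto simp: mult pow)
  qed
  have "g = n3*n5*n4^2*n2"
    using g0 pos local by (intro multiplicity_eq_int) auto
  moreover have "- r = n3*n5^3*n1"
    using r0 pos local by (intro multiplicity_eq_int) auto
  moreover have "gcd g r dvd s"
  proof (cases "s = 0")
    case False
    show ?thesis
    proof (rule multiplicity_le_imp_dvd)
      fix p :: int assume "prime p"
      have "multiplicity p (gcd g r) = min (multiplicity p g) (multiplicity p r)"
        using g0 r0 \<open>prime p\<close> by (intro multiplicity_gcd) auto
      also have "\<dots> \<le> multiplicity p s" using local[OF \<open>prime p\<close>] False by blast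
      finally show "multiplicity p (gcd g r) \<le> multiplicity p s" .
    qed (use g0 in simp)
  qed simp
  ultimately show ?thesis by simp
qed

lemma isotropic_vector_normal_form:
  assumes sym: "transpose S = S" and x: "x \<in> CS S" and det: "det S \<noteq> 0"
  obtains P g r s t where "det P = 1" "column 1 P = x" "g > 0"
    "transpose P ** S ** P = normal_form g r s t"
proof -
  obtain P where P: "det P = 1" "column 1 P = x"
    using x primitive_vec_column_SL3 unfolding CS_def by blast
  define T where "T = transpose P ** S ** P"
  have "transpose T = T" unfolding T_def using sym by (simp add: matrix_transpose_mul matrix_mul_assoc)
  then have Tsym: "T$i$j = T$j$i" for i j by (rule symmetric_entry)
  have "T$1$1 = 0" using x unfolding T_def congruence_1_1_qf P CS_def by simp
  then have T: "T = m3 0 (T$1$2) (T$1$3) (T$1$2) (T$2$2) (T$2$3) (T$1$3) (T$2$3) (T$3$3)"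
    using Tsym[of 2 1] Tsym[of 3 1] Tsym[of 3 2] by (intro trans[OF m3_entries[of T]]) simp
  have "det T \<noteq> 0" unfolding T_def using P det by (simp add: det_mul det_transpose)
  then obtain Q g r s t where Q: "det Q = 1" "column 1 Q = column 1 (mat 1)" "g > 0"
    "transpose Q ** T ** Q = normal_form g r s t"
    using isotropic_corner_reduction[of "T$1$2" "T$1$3" "T$2$2" "T$2$3" "T$3$3", folded T] by blast
  have "det (P ** Q) = 1" using P Q by (simp add: det_mul)
  moreover have "column 1 (P ** Q) = x"
  proof -
    have "column 1 (P ** Q) = P *v column 1 (mat 1)" using Q(2) by (simp only: column1_mult)
    also have "\<dots> = column 1 P" by (simp only: column1_mult[symmetric] matrix_mul_rid)
    finally show ?thesis using P(2) by simp
  qed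
  moreover have "transpose (P ** Q) ** S ** (P ** Q) = normal_form g r s t"
    using Q unfolding congruence_mult T_def by simp
  ultimately show ?thesis using Q that by blast
qed

lemma special_normal_form_coefficients:
  assumes sp: "special S" and P: "det P = 1" and T: "transpose P ** S ** P = normal_form g r s t"
    and g0: "g > 0"
  shows "g = N3 S * N5 S * (N4 S)^2 * N2 S \<and> r = - (N3 S * (N5 S)^3 * N1 S) \<and> gcd g r dvd s
    \<and> N4 S * N2 S dvd r*t - s * s"
proof -
  define W where "W = entries_gcd (adj3 S)"
  note F = special_invariants[OF sp, folded W_def]
  have "det S = - g*g*r" using det_normal_form[of g r s t] P by (simp flip: T add: det_mul det_transpose)
  then have det: "g*g*(-r) = W^2 * Delta S" using F by simp
  have r0: "r < 0" using \<open>det S = - g*g*r\<close> sp g0 unfolding special_def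
    by (simp add: mult_less_0_iff zero_less_mult_iff)
  have W: "W = gcd (r*t - s * s) (gcd (g * s) (gcd (g*r) (g*g)))"
    using entries_gcd_adj3_congruence[OF P, of S] unfolding T W_def entries_gcd_adj3_normal_form ..
  have prim1: "entries_gcd (normal_form g r s t) = 1"
    using entries_gcd_congruence[OF P, of S] sp unfolding T special_def primitive_mat_def by simp
  have prim: "\<not> (p dvd g \<and> p dvd r \<and> p dvd s \<and> p dvd t)" if "prime p" for p
  proof
    assume "p dvd g \<and> p dvd r \<and> p dvd s \<and> p dvd t"
    then have "p dvd entries_gcd (normal_form g r s t)"
      unfolding normal_form_def entries_gcd_m3 by (auto intro: Gcd_greatest)
    then show False using prim1 that by (simp add: not_prime_unit)
  qed
  have "g = N3 S * N5 S * (N4 S)^2 * N2 S \<and> r = - (N3 S * (N5 S)^3 * N1 S) \<and> gcd g r dvd s"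
    by (rule normal_form_coefficients[OF g0 r0 W prim det]) (use F in auto)
  moreover have "N4 S * N2 S dvd r*t - s * s"
  proof (rule dvd_trans)
    have "W = (N4 S * N2 S) * ((N5 S)^2 * N3 S)" using F by (simp add: algebra_simps)
    then show "N4 S * N2 S dvd W" ..
    show "W dvd r*t - s * s" unfolding W by (rule gcd_dvd1)
  qed
  ultimately show ?thesis by blast
qed

lemma good_reductionE:
  assumes sym: "transpose S = S" and sp: "special S" and x: "x \<in> CS S"
  obtains l M where "good S x l M"
proof -
  have "det S \<noteq> 0" using sp unfolding special_def by simp
  then obtain P g r s t where P: "det P = 1" "column 1 P = x" and g0: "g > 0"
    and T: "transpose P ** S ** P = normal_form g r s t"
    using isotropic_vector_normal_form[OF sym x] by blast
  note C = special_normal_form_coefficients[OF sp P(1) T g0]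
  define n where "n = N4 S * N2 S"
  obtain c where c: "s = gcd g r * c" using C by blast
  obtain u w where uw: "u * g + w * r = gcd g r" using bezout_int by blast
  define k m where "k = - c * u" "m = - c * w"
  have s0: "s + k*g + m*r = 0" unfolding k_m_def c uw[symmetric] by (simp add: algebra_simps)
  define t' where "t' = t + 2*m * s + m^2*r"
  \<comment> \<open>\<open>n\<close> divides \<open>r t' = (r t - s\<^sup>2) + (k g)\<^sup>2\<close> and is coprime to \<open>r\<close>.\<close>
  have rt: "r * t' = (r*t - s * s) + (k*g)^2"
  proof -
    have "s + m*r = - (k*g)" using s0 by linarith
    then have "(s + m*r)^2 = (k*g)^2" by simp
    then show ?thesis unfolding t'_def by (simp add: algebra_simps power2_eq_square)
  qed
  have "n dvd g" using C unfolding n_def by (simp add: power2_eq_square)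
  then have "n dvd (k*g)^2" by (simp add: power2_eq_square)
  moreover have "n dvd r*t - s * s" using C unfolding n_def by blast
  ultimately have "n dvd r * t'" unfolding rt by simp
  moreover have "coprime n r"
    using C special_invariants[OF sp] squarefree_prod5_coprime[of "N1 S" "N2 S" "N3 S" "N4 S" "N5 S" 1 3]
    unfolding n_def by simp
  ultimately have "n dvd t'" by (simp add: coprime_dvd_mult_right_iff)
  then obtain l where l: "t' = n * l" by blast
  define M where "M = P ** m3 1 k 0 0 1 m 0 0 1"
  have "det M = 1" unfolding M_def using P by (simp add: det_mul m3_det)
  moreover have "column 1 M = x" unfolding M_def using P by (simp add: column1_mult_unipotent)
  moreover have "transpose M ** S ** M = S3 S l"
    unfolding M_def congruence_mult T normal_form_shear S3_normal_form
    using C s0 l unfolding t'_def n_def by (simp add: algebra_simps)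
  ultimately show ?thesis using that unfolding good_def by blast
qed

lemma adj3_S3:
  assumes "special S"
  shows "adj3 (S3 S l) $ i $ j = entries_gcd (adj3 S) * S3_dagger S l $ i $ j"
proof -
  have "adj3 (S3 S l) = m3 (- l * N5 S * N1 S * entries_gcd (adj3 S)) 0
      (N3 S * (N5 S)^2 * N4 S * N1 S * entries_gcd (adj3 S)) 0
      (- N3 S * (N4 S)^3 * N2 S * entries_gcd (adj3 S)) 0
      (N3 S * (N5 S)^2 * N4 S * N1 S * entries_gcd (adj3 S)) 0 0"
    unfolding S3_normal_form adj3_normal_form m3_eq_iff using special_invariants[OF assms]
    by (simp add: algebra_simps power2_eq_square power3_eq_cube)
  moreover have "S3_dagger S l = m3 (- l * N5 S * N1 S) 0 (N3 S * (N5 S)^2 * N4 S * N1 S)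
      0 (- N3 S * (N4 S)^3 * N2 S) 0 (N3 S * (N5 S)^2 * N4 S * N1 S) 0 0"
    unfolding S3_dagger_def m3_def ..
  ultimately show ?thesis using exhaust_3[of i] exhaust_3[of j] by auto
qed

lemma good_entries_gcd:
  assumes "good S x l M"
  shows "entries_gcd (S3 S l) = entries_gcd S" "entries_gcd (adj3 (S3 S l)) = entries_gcd (adj3 S)"
  using assms unfolding good_def by (metis entries_gcd_congruence entries_gcd_adj3_congruence)+

lemma prim_adj_S3:
  assumes sp: "special S" and gd: "good S x l M"
  shows "prim_adj (S3 S l) = S3_dagger S l"
proof -
  have "entries_gcd (adj3 S) \<noteq> 0" using special_invariants[OF sp] by simp
  then show ?thesis unfolding prim_adj_def good_entries_gcd(2)[OF gd]
    by (simp add: vec_eq_iff adj3_S3[OF sp])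
qed

lemma good_coprime_NN:
  assumes sp: "special S" and gd: "good S x l M"
  shows "coprime l (NN S)"
proof (rule ccontr)
  define W where "W = entries_gcd (adj3 S)"
  note F = special_invariants[OF sp, folded W_def]
  assume "\<not> coprime l (NN S)"
  then have "\<not> is_unit (gcd l (NN S))" by (simp add: coprime_iff_gcd_eq_1)
  moreover have "gcd l (NN S) \<noteq> 0" using F by simp
  ultimately obtain p where "prime p" "p dvd gcd l (NN S)" using prime_divisorE by blast
  then have p: "prime p" "p dvd l" "p dvd N3 S * N4 S * N5 S" using F by auto
  have S1: "entries_gcd (S3 S l) = 1" using sp good_entries_gcd(1)[OF gd]
    unfolding special_def primitive_mat_def by simp
  \<comment> \<open>If \<open>p | N\<^sub>5\<close> it divides all entries of \<open>S\<^sub>3\<close>, otherwise all entries of \<open>S\<^sub>3\<^sup>\<dagger>\<close>.\<close>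
  have "p dvd N5 S \<or> p dvd N3 S \<or> p dvd N4 S" using p by (auto simp: prime_dvd_mult_iff)
  then show False
  proof
    assume "p dvd N5 S"
    then have "p dvd entries_gcd (S3 S l)"
      unfolding S3_normal_form normal_form_def entries_gcd_m3 using p(2)
      by (intro Gcd_greatest) (auto simp: power3_eq_cube)
    then show False using S1 p(1) by (simp add: not_prime_unit)
  next
    assume "p dvd N3 S \<or> p dvd N4 S"
    then have "p dvd S3_dagger S l $ i $ j" for i j
      unfolding S3_dagger_def m3_def[symmetric] using p(2) exhaust_3[of i] exhaust_3[of j]
      by (elim disjE) (auto simp: power3_eq_cube)
    then have "p * W dvd adj3 (S3 S l) $ i $ j" for i j
      unfolding adj3_S3[OF sp] W_def[symmetric] by (simp add: mult.commute[of p] mult_dvd_mono)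
    then have "p * W dvd entries_gcd (adj3 (S3 S l))" by (rule entries_gcd_greatest)
    then have "p * W dvd 1 * W" using good_entries_gcd(2)[OF gd] by (simp add: W_def)
    then have "p dvd 1" using F by (subst (asm) dvd_mult_cancel_right) auto
    then show False using p(1) by (simp add: not_prime_unit)
  qed
qed

lemma good_shear:
  assumes sp: "special S" and gd: "good S x l M"
  defines "K \<equiv> (N5 S)^2 * N1 S * (N4 S)^2 * N2 S"
  shows "good S x (l + NN S * (2 * v - a^2 * K))
    (M ** m3 1 (a * (N5 S)^2 * N1 S) v 0 1 (a * (N4 S)^2 * N2 S) 0 0 1)"
proof -
  have "NN S = N3 S * N4 S * N5 S" using special_invariants[OF sp] by simp
  show ?thesis
    using gd unfolding good_def
    by (simp add: det_mul m3_det column1_mult_unipotent congruence_mult S3_normal_form normal_form_shear)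
       (simp add: K_def \<open>NN S = N3 S * N4 S * N5 S\<close> algebra_simps power2_eq_square power3_eq_cube)
qed

lemma good_mod_NN:
  assumes sp: "special S" and od: "odd (det S)" and gd: "good S x l M"
  obtains M' where "good S x (l mod NN S) M'"
proof -
  define K where "K = (N5 S)^2 * N1 S * (N4 S)^2 * N2 S"
  have F: "det S = (N1 S) * (N2 S)^2 * (N3 S)^3 * (N4 S)^4 * (N5 S)^5"
    using special_invariants[OF sp] by (simp add: algebra_simps power2_eq_square power3_eq_cube eval_nat_numeral)
  then have "odd K" using od unfolding K_def by auto
  define j where "j = - (l div NN S)"
  define a :: int where "a = j mod 2"
  have "a^2 = a" "even (j + a * K)" unfolding a_def using \<open>odd K\<close> by (auto simp: power2_eq_square elim!: oddE)
  then obtain v where "j = 2 * v - a^2 * K" by (metis add_diff_cancel_right' dvdE)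
  then have "l mod NN S = l + NN S * (2 * v - a^2 * K)"
    unfolding j_def by (metis minus_mult_div_eq_mod mult.commute diff_conv_add_uminus mult_minus_right)
  then show ?thesis using good_shear[OF sp gd, of v a] that unfolding K_def by metis
qed

text \<open>Such a \<open>U\<close> is unipotent upper triangular; its \<open>(2,3)\<close> entry is forced to be a multiple of
  \<open>N\<^sub>4\<^sup>2 N\<^sub>2\<close>, and then the \<open>(3,3)\<close> entry of the congruence gives the claim.\<close>
lemma S3_stabilizer_dvd:
  assumes sp: "special S" and dU: "det U = 1" and cU: "column 1 U = column 1 (mat 1)"
    and sU: "transpose U ** S3 S l ** U = S3 S l'"
  shows "NN S dvd l' - l"
proof -
  note F = special_invariants[OF sp]
  define u v p q r w where "u = U$1$2" "v = U$1$3" "p = U$2$2" "q = U$2$3" "r = U$3$2" "w = U$3$3"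
  have "U$1$1 = 1" "U$2$1 = 0" "U$3$1 = 0"
    using cU by (simp_all add: column_def vec_eq_iff mat_def forall_3)
  then have Ue: "U = m3 1 u v 0 p q 0 r w" unfolding u_v_p_q_r_w_def
    by (intro trans[OF m3_entries[of U]]) simp
  define a b where "a = N3 S * N5 S * (N4 S)^2 * N2 S" "b = - N3 S * (N5 S)^3 * N1 S"
  have a0: "a > 0" unfolding a_b_def using F by simp
  have E: "a*r = 0 \<and> a*w = a \<and> a*(u*w + r * v) + b*p*q + N4 S * N2 S * l*r*w = 0 \<and>
      2*a * v * w + b*q*q + N4 S * N2 S * l*w*w = N4 S * N2 S * l'"
    using sU unfolding Ue S3_normal_form normal_form_def m3_transpose m3_mult m3_eq_iff a_b_def[symmetric]
    by (simp add: algebra_simps)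
  then have "r = 0" "w = 1" using a0 by simp_all
  moreover have "p*w - q*r = 1" using dU unfolding Ue m3_det by simp
  ultimately have "p = 1" by simp
  with E \<open>r = 0\<close> \<open>w = 1\<close> have E23: "u*a + q*b = 0" and E33: "2*a * v + b*q*q = N4 S * N2 S * (l' - l)"
    by (simp_all add: algebra_simps)
  have "u * ((N4 S)^2 * N2 S) = q * ((N5 S)^2 * N1 S)"
    using E23 F unfolding a_b_def by (simp add: algebra_simps power2_eq_square power3_eq_cube)
  then have "(N4 S)^2 * N2 S dvd q * ((N5 S)^2 * N1 S)" by (metis dvd_triv_right)
  moreover have "coprime ((N4 S)^2 * N2 S) ((N5 S)^2 * N1 S)"
    using squarefree_prod5_coprime[of "N1 S" "N2 S" "N3 S" "N4 S" "N5 S" 2 2] F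
    by (simp add: coprime_mult_right_iff)
  ultimately obtain q' where q': "q = (N4 S)^2 * N2 S * q'" by (auto simp: coprime_dvd_mult_left_iff elim!: dvdE)
  have "N4 S * N2 S * (l' - l) = N4 S * N2 S * (NN S * (2 * v - (N5 S)^2 * N1 S * (N4 S)^2 * N2 S * q' * q'))"
    using E33 F unfolding a_b_def q' by (simp add: algebra_simps power2_eq_square power3_eq_cube)
  then show ?thesis using F by simp
qed

lemma S3_sign_change:
  assumes "d * d = 1"
  shows "transpose (m3 1 0 0 0 d 0 0 0 1) ** S3 S l ** m3 1 0 0 0 d 0 0 0 1 = S3 S l"
  unfolding S3_normal_form normal_form_def m3_transpose m3_mult m3_eq_iff using assms
  by (simp add: algebra_simps)

lemma good_same_orbit_dvd:
  assumes sp: "special S" and orb: "same_orbit S x x'"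
    and gd: "good S x l M" and gd': "good S x' l' M'"
  shows "NN S dvd l' - l"
proof -
  obtain A where A: "det A = 1 \<or> det A = -1" "transpose A ** S ** A = S" "x' = A *v x"
    using orb unfolding same_orbit_def by blast
  \<comment> \<open>\<open>J\<close> flips the second basis vector when \<open>det A = -1\<close>; it is an automorph of \<open>S\<^sub>3\<close>.\<close>
  define J where "J = m3 1 0 0 0 (det A) 0 0 0 1"
  define M1 where "M1 = A ** M ** J"
  have dM1: "det M1 = 1" using A(1) gd unfolding M1_def J_def good_def by (auto simp: det_mul m3_det)
  have cM1: "column 1 M1 = x'" using A(3) gd
    unfolding M1_def J_def good_def column1_mult_unipotent by (simp add: column1_mult)
  have sM1: "transpose M1 ** S ** M1 = S3 S l"
    using A gd unfolding M1_def J_def good_def congruence_mult by (auto intro: S3_sign_change)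
  define U where "U = adj3 M1 ** M'"
  have "M1 ** U = M'" unfolding U_def using dM1 by (simp add: matrix_mul_assoc mult_adj3)
  then have sU: "transpose U ** S3 S l ** U = S3 S l'"
    using gd' unfolding sM1[symmetric] congruence_mult[symmetric] good_def by simp
  have dU: "det U = 1" unfolding U_def using dM1 gd' by (simp add: det_mul det_adj3 good_def)
  have cU: "column 1 U = column 1 (mat 1)"
  proof -
    have "column 1 U = adj3 M1 *v column 1 M1" using gd' cM1 unfolding U_def good_def column1_mult by simp
    also have "\<dots> = column 1 (mat 1)" using dM1 by (simp add: adj3_mult_self flip: column1_mult)
    finally show ?thesis .
  qed
  show ?thesis by (rule S3_stabilizer_dvd[OF sp dU cU sU])
qed

theorem lemma1:
  fixes S :: mat3
  assumes sym: "transpose S = S"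
    and sp: "special S"
  shows "(\<forall>x\<in>CS S. \<exists>l M. good S x l M)
    \<and> (odd (det S) \<longrightarrow>
        (\<forall>x\<in>CS S. \<exists>l M. 0 \<le> l \<and> l < NN S \<and> gcd l (NN S) = 1 \<and> good S x l M)
        \<and> (\<forall>x\<in>CS S. \<forall>x'\<in>CS S. \<forall>l l' M M'. same_orbit S x x' \<and>
              0 \<le> l \<and> l < NN S \<and> gcd l (NN S) = 1 \<and> good S x l M \<and>
              0 \<le> l' \<and> l' < NN S \<and> gcd l' (NN S) = 1 \<and> good S x' l' M' \<longrightarrow> l = l'))
    \<and> (\<forall>x\<in>CS S. \<forall>l M. good S x l M \<longrightarrow> prim_adj (S3 S l) = S3_dagger S l)"
proof (intro conjI impI ballI allI)
  have NN0: "NN S > 0" using special_invariants[OF sp] by simp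
  fix x assume x: "x \<in> CS S"
  then obtain l M where gd: "good S x l M" by (rule good_reductionE[OF sym sp])
  then show "\<exists>l M. good S x l M" by blast
  assume "odd (det S)"
  then obtain M' where "good S x (l mod NN S) M'" using good_mod_NN[OF sp _ gd] by blast
  moreover have "gcd (l mod NN S) (NN S) = 1"
    using good_coprime_NN[OF sp gd] NN0 by (simp add: coprime_iff_gcd_eq_1[symmetric])
  ultimately show "\<exists>l M. 0 \<le> l \<and> l < NN S \<and> gcd l (NN S) = 1 \<and> good S x l M"
    using NN0 by (metis pos_mod_sign pos_mod_bound)
next
  fix x x' l l' M M'
  assume h: "same_orbit S x x' \<and> 0 \<le> l \<and> l < NN S \<and> gcd l (NN S) = 1 \<and> good S x l M \<and>
    0 \<le> l' \<and> l' < NN S \<and> gcd l' (NN S) = 1 \<and> good S x' l' M'"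
  then have "NN S dvd l' - l" using good_same_orbit_dvd[OF sp] by blast
  then show "l = l'" using h dvd_imp_le_int[of "l' - l" "NN S"] by fastforce
next
  fix x l M assume "good S x l M"
  then show "prim_adj (S3 S l) = S3_dagger S l" by (rule prim_adj_S3[OF sp])
qed

end
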